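(* Let $L=E[C_1,\dots,C_n]$ be a congruence uniform lattice that is extremal. Then every element of the spine of $L$ is left modular.
   Context: All lattices are finite. For a convex subset $C$ of a lattice $L$ (convex: $x,y\in C\Rightarrow[x,y]\subseteq C$), let $I_L(C)=\{y\in L\mid\exists x\in C,\ y\le x\}$, and let the doubling $L[C]$ be the subposet of $L\times\{0<1\}$ on $\big(I_L(C)\times\{0\}\big)\sqcup\big(((L\setminus I_L(C))\cup C)\times\{1\}\big)$. $E[\,]$ is the one-element lattice and $E[C_1,\dots,C_{i+1}]:=E[C_1,\dots,C_i][C_{i+1}]$ with $C_{i+1}$ a nonempty convex subset of $E[C_1,\dots,C_i]$; if every $C_i$ is an interval, the lattice is congruence uniform. The length of a poset is the maximum number of elements of a chain minus one; the spine is the set of elements lying on some chain of maximum length. $L$ is extremal if its length equals both the number of join-irreducible elements (covering exactly one element) and the number of meet-irreducible elements (covered by exactly one element). An element $a$ is left modular if for all $b<c$, $(b\vee a)\wedge c=b\vee(a\wedge c)$. *)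

theory Defs
  imports Main
begin

text \<open>Elements of E[C_1,...,C_n] are encoded as boolean lists of length n:
  the element (x,b) of L[C] (a subposet of L x {0<1}) is encoded as b # x.\<close>

definition leq :: "bool list \<Rightarrow> bool list \<Rightarrow> bool" where
  "leq xs ys \<longleftrightarrow> list_all2 (\<le>) xs ys"

definition lt :: "bool list \<Rightarrow> bool list \<Rightarrow> bool" where
  "lt xs ys \<longleftrightarrow> leq xs ys \<and> xs \<noteq> ys"

definition down_set :: "bool list set \<Rightarrow> bool list set \<Rightarrow> bool list set" where
  "down_set L C = {y \<in> L. \<exists>x\<in>C. leq y x}"

definition doubling :: "bool list set \<Rightarrow> bool list set \<Rightarrow> bool list set" where
  "doubling L C = (\<lambda>x. False # x) ` down_set L C
                \<union> (\<lambda>x. True # x) ` ((L - down_set L C) \<union> C)"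

definition interval :: "bool list set \<Rightarrow> bool list \<Rightarrow> bool list \<Rightarrow> bool list set" where
  "interval L a b = {x \<in> L. leq a x \<and> leq x b}"

inductive cu_doubling :: "bool list set \<Rightarrow> bool" where
  base: "cu_doubling {[]}"
| step: "cu_doubling L \<Longrightarrow> a \<in> L \<Longrightarrow> b \<in> L \<Longrightarrow> leq a b
          \<Longrightarrow> cu_doubling (doubling L (interval L a b))"

definition is_chain :: "bool list set \<Rightarrow> bool list set \<Rightarrow> bool" where
  "is_chain L K \<longleftrightarrow> K \<subseteq> L \<and> (\<forall>x\<in>K. \<forall>y\<in>K. leq x y \<or> leq y x)"

definition poset_length :: "bool list set \<Rightarrow> nat" where
  "poset_length L = Max {card K - 1 | K. is_chain L K}"

definition spine :: "bool list set \<Rightarrow> bool list set" where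
  "spine L = {x \<in> L. \<exists>K. is_chain L K \<and> x \<in> K \<and> card K - 1 = poset_length L}"

definition covers :: "bool list set \<Rightarrow> bool list \<Rightarrow> bool list \<Rightarrow> bool" where
  "covers L x y \<longleftrightarrow> x \<in> L \<and> y \<in> L \<and> lt y x \<and> \<not> (\<exists>z\<in>L. lt y z \<and> lt z x)"

definition join_irreducibles :: "bool list set \<Rightarrow> bool list set" where
  "join_irreducibles L = {x \<in> L. card {y. covers L x y} = 1}"

definition meet_irreducibles :: "bool list set \<Rightarrow> bool list set" where
  "meet_irreducibles L = {x \<in> L. card {y. covers L y x} = 1}"

definition extremal :: "bool list set \<Rightarrow> bool" where
  "extremal L \<longleftrightarrow> poset_length L = card (join_irreducibles L)
                 \<and> poset_length L = card (meet_irreducibles L)"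

definition join :: "bool list set \<Rightarrow> bool list \<Rightarrow> bool list \<Rightarrow> bool list" where
  "join L x y = (THE z. z \<in> L \<and> leq x z \<and> leq y z \<and> (\<forall>w\<in>L. leq x w \<and> leq y w \<longrightarrow> leq z w))"

definition meet :: "bool list set \<Rightarrow> bool list \<Rightarrow> bool list \<Rightarrow> bool list" where
  "meet L x y = (THE z. z \<in> L \<and> leq z x \<and> leq z y \<and> (\<forall>w\<in>L. leq w x \<and> leq w y \<longrightarrow> leq w z))"

definition left_modular :: "bool list set \<Rightarrow> bool list \<Rightarrow> bool" where
  "left_modular L a \<longleftrightarrow> (\<forall>b\<in>L. \<forall>c\<in>L. lt b c \<longrightarrow>
      meet L (join L b a) c = join L b (meet L a c))"

end

theory Submission
  imports Defs
begin

(* The number of True bits strictly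
   increases along a chain, so the length of L is at most n; each doubling at [p,q] lifts the old
   join-irreducibles and adds the new one (p,1), so L has at least n join-irreducibles.
   Extremality therefore makes every maximal chain have n + 1 elements. Such a chain of
   L[[p,q]] projects onto a maximal chain of L, and since it has one element more it contains
   both copies (x,0) and (x,1) of some x in [p,q]; hence p <= a for each element (a,1) of the
   chain. Left modularity of (a,alpha) then follows from that of a, by induction on n: joins in
   L[[p,q]] are componentwise, and the meet of (a,alpha) and (c,gamma) is the meet m of a and c
   with top bit alpha & gamma & [m lies in the upper copy]. *)

lemma leq_Cons [simp]: "leq (b # x) (c # y) \<longleftrightarrow> b \<le> c \<and> leq x y"
  by (simp add: leq_def)

lemma leq_refl [simp]: "leq x x"
  by (simp add: leq_def list.rel_refl)

lemma leq_trans: "leq x y \<Longrightarrow> leq y z \<Longrightarrow> leq x z"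
  unfolding leq_def by (rule list_all2_trans[OF order_trans])

lemma leq_antisym: "leq x y \<Longrightarrow> leq y x \<Longrightarrow> x = y"
  unfolding leq_def by (rule list_all2_antisym) auto

fun sup_bits :: "bool list \<Rightarrow> bool list \<Rightarrow> bool list" where
  "sup_bits (a # x) (b # y) = (a \<or> b) # sup_bits x y"
| "sup_bits _ _ = []"

lemma sup_bits_upper1: "length x = length y \<Longrightarrow> leq x (sup_bits x y)"
  by (induct x y rule: sup_bits.induct) auto

lemma sup_bits_upper2: "length x = length y \<Longrightarrow> leq y (sup_bits x y)"
  by (induct x y rule: sup_bits.induct) auto

lemma sup_bits_least: "leq x w \<Longrightarrow> leq y w \<Longrightarrow> leq (sup_bits x y) w"
  by (induct x y arbitrary: w rule: sup_bits.induct) (auto simp: leq_def list_all2_Cons1)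

definition is_inf :: "bool list set \<Rightarrow> bool list \<Rightarrow> bool list \<Rightarrow> bool list \<Rightarrow> bool" where
  "is_inf L x y z \<longleftrightarrow>
    z \<in> L \<and> leq z x \<and> leq z y \<and> (\<forall>w\<in>L. leq w x \<and> leq w y \<longrightarrow> leq w z)"

lemma meet_eqI: "is_inf L x y z \<Longrightarrow> meet L x y = z"
  unfolding meet_def is_inf_def by (rule the_equality) (auto intro: leq_antisym)

lemma join_eqI: "length x = length y \<Longrightarrow> sup_bits x y \<in> L \<Longrightarrow> join L x y = sup_bits x y"
  unfolding join_def
  by (rule the_equality) (auto intro: leq_antisym sup_bits_upper1 sup_bits_upper2 sup_bits_least)

definition in_upper :: "bool list \<Rightarrow> bool list \<Rightarrow> bool list \<Rightarrow> bool" where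
  "in_upper p q x \<longleftrightarrow> \<not> leq x q \<or> leq p x"

lemma in_upper_mono: "in_upper p q x \<Longrightarrow> leq x y \<Longrightarrow> in_upper p q y"
  unfolding in_upper_def by (meson leq_trans)

lemma Cons_mem_doubling_interval:
  assumes "q \<in> L" "leq p q"
  shows "b # x \<in> doubling L (interval L p q) \<longleftrightarrow>
    x \<in> L \<and> (if b then in_upper p q x else leq x q)"
proof -
  have down: "down_set L (interval L p q) = {y \<in> L. leq y q}"
    using assms unfolding down_set_def interval_def by (auto intro: leq_trans)
  show ?thesis
    unfolding doubling_def down by (auto simp: in_upper_def interval_def)
qed

lemma doubling_interval_memE:
  assumes "w \<in> doubling L (interval L p q)" "q \<in> L" "leq p q"
  obtains b x where "w = b # x" "x \<in> L" "if b then in_upper p q x else leq x q"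
proof -
  from assms(1) obtain b x where w: "w = b # x"
    unfolding doubling_def by auto
  with assms(1) have "x \<in> L \<and> (if b then in_upper p q x else leq x q)"
    by (simp add: Cons_mem_doubling_interval[OF assms(2,3)])
  with w that show ?thesis
    by blast
qed

lemma interval_subset: "interval L p q \<subseteq> L"
  by (auto simp: interval_def)

lemma finite_doubling: "finite L \<Longrightarrow> finite C \<Longrightarrow> finite (doubling L C)"
  by (simp add: doubling_def down_set_def)

lemma length_doubling:
  "(\<forall>x\<in>L. length x = n) \<Longrightarrow> C \<subseteq> L \<Longrightarrow> w \<in> doubling L C \<Longrightarrow> length w = Suc n"
  by (auto simp: doubling_def down_set_def)

lemma sup_bits_mem_doubling:
  assumes "q \<in> L" "leq p q"
    and "b # x \<in> doubling L (interval L p q)" "c # y \<in> doubling L (interval L p q)"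
    and "length x = length y" "sup_bits x y \<in> L"
  shows "(b \<or> c) # sup_bits x y \<in> doubling L (interval L p q)"
proof -
  note mem = Cons_mem_doubling_interval[OF assms(1,2)]
  have "if b \<or> c then in_upper p q (sup_bits x y) else leq (sup_bits x y) q"
    using assms(3,4) in_upper_mono sup_bits_upper1[OF assms(5)] sup_bits_upper2[OF assms(5)]
      sup_bits_least
    unfolding mem by (auto split: if_splits)
  then show ?thesis
    using assms(6) mem by simp
qed

lemma is_inf_doubling:
  assumes "q \<in> L" "leq p q" and m: "is_inf L x y m"
    and "b # x \<in> doubling L (interval L p q)" "c # y \<in> doubling L (interval L p q)"
  shows "is_inf (doubling L (interval L p q)) (b # x) (c # y) ((b \<and> c \<and> in_upper p q m) # m)"
proof -
  define L' where "L' = doubling L (interval L p q)"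
  note mem = Cons_mem_doubling_interval[OF assms(1,2), folded L'_def]
  define bit where "bit = (b \<and> c \<and> in_upper p q m)"
  have mL: "m \<in> L" and mx: "leq m x" and my: "leq m y"
    using m unfolding is_inf_def by auto
  have "b \<Longrightarrow> in_upper p q x" "\<not> b \<Longrightarrow> leq x q" "c \<Longrightarrow> in_upper p q y" "\<not> c \<Longrightarrow> leq y q"
    using assms(4,5) unfolding L'_def[symmetric] mem by auto
  then have "leq m q" if "\<not> bit"
    using that mx my leq_trans unfolding bit_def in_upper_def by blast
  then have "bit # m \<in> L'"
    using mL mem unfolding bit_def by auto
  moreover have "leq w (bit # m)" if "w \<in> L'" "leq w (b # x)" "leq w (c # y)" for w
  proof -
    obtain d z where w: "w = d # z" "z \<in> L" "if d then in_upper p q z else leq z q"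
      using doubling_interval_memE \<open>w \<in> L'\<close> assms(1,2) unfolding L'_def by metis
    then have "leq z m"
      using m that unfolding is_inf_def by auto
    moreover have "d \<longrightarrow> bit"
      using w that in_upper_mono \<open>leq z m\<close> unfolding bit_def by auto
    ultimately show ?thesis
      using w by auto
  qed
  ultimately show ?thesis
    using mx my unfolding is_inf_def L'_def bit_def by auto
qed

inductive cu_doubling_steps :: "nat \<Rightarrow> bool list set \<Rightarrow> bool" where
  base: "cu_doubling_steps 0 {[]}"
| step: "cu_doubling_steps n L \<Longrightarrow> p \<in> L \<Longrightarrow> q \<in> L \<Longrightarrow> leq p q
          \<Longrightarrow> cu_doubling_steps (Suc n) (doubling L (interval L p q))"

lemma cu_doubling_steps_exists: "cu_doubling L \<Longrightarrow> \<exists>n. cu_doubling_steps n L"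
  by (induct rule: cu_doubling.induct) (auto intro: cu_doubling_steps.intros)

lemma cu_doubling_steps_finite: "cu_doubling_steps n L \<Longrightarrow> finite L"
  by (induct rule: cu_doubling_steps.induct)
    (simp_all add: finite_doubling finite_subset[OF interval_subset])

lemma cu_doubling_steps_length: "cu_doubling_steps n L \<Longrightarrow> x \<in> L \<Longrightarrow> length x = n"
proof (induct arbitrary: x rule: cu_doubling_steps.induct)
  case (step n L p q)
  then show ?case
    using length_doubling[OF _ interval_subset] by blast
qed simp

lemma cu_doubling_steps_sup_closed:
  "cu_doubling_steps n L \<Longrightarrow> x \<in> L \<Longrightarrow> y \<in> L \<Longrightarrow> sup_bits x y \<in> L"
proof (induct arbitrary: x y rule: cu_doubling_steps.induct)
  case base
  then show ?case by simp
next
  case (step n L p q)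
  from step.prems step.hyps(4,5) obtain b x' c y'
    where "x = b # x'" "y = c # y'" "x' \<in> L" "y' \<in> L"
    by (metis doubling_interval_memE)
  then show ?case
    using step sup_bits_mem_doubling cu_doubling_steps_length by simp
qed

lemma cu_doubling_steps_is_inf:
  "cu_doubling_steps n L \<Longrightarrow> x \<in> L \<Longrightarrow> y \<in> L \<Longrightarrow> \<exists>z. is_inf L x y z"
proof (induct arbitrary: x y rule: cu_doubling_steps.induct)
  case base
  then show ?case by (auto simp: is_inf_def)
next
  case (step n L p q)
  from step.prems step.hyps(4,5) obtain b x' c y'
    where "x = b # x'" "y = c # y'" "x' \<in> L" "y' \<in> L"
    by (metis doubling_interval_memE)
  moreover obtain m where "is_inf L x' y' m"
    using step.hyps(2) \<open>x' \<in> L\<close> \<open>y' \<in> L\<close> by blast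
  ultimately show ?case
    using is_inf_doubling[OF step.hyps(4,5)] step.prems by blast
qed

lemma join_cu_doubling_steps:
  "cu_doubling_steps n L \<Longrightarrow> x \<in> L \<Longrightarrow> y \<in> L \<Longrightarrow> join L x y = sup_bits x y"
  by (simp add: join_eqI cu_doubling_steps_length cu_doubling_steps_sup_closed)

lemma count_True_mono: "leq x y \<Longrightarrow> count_list x True \<le> count_list y True"
  unfolding leq_def by (induct rule: list_all2_induct) auto

lemma count_True_eq_imp_eq: "leq x y \<Longrightarrow> count_list x True = count_list y True \<Longrightarrow> x = y"
  unfolding leq_def
proof (induct rule: list_all2_induct)
  case (Cons a x b y)
  moreover have "count_list x True \<le> count_list y True"
    using count_True_mono[unfolded leq_def, OF Cons.hyps(2)] .
  ultimately show ?case
    by (auto split: if_splits)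
qed simp

lemma chain_card_le:
  assumes "\<forall>x\<in>L. length x = n" "is_chain L K"
  shows "card K \<le> Suc n"
proof -
  have "inj_on (\<lambda>x. count_list x True) K"
    using assms(2) count_True_eq_imp_eq unfolding inj_on_def is_chain_def by metis
  then have "card K = card ((\<lambda>x. count_list x True) ` K)"
    by (simp add: card_image)
  also have "\<dots> \<le> card {..n}"
    using assms count_le_length unfolding is_chain_def by (intro card_mono) fastforce+
  finally show ?thesis
    by simp
qed

lemma poset_length_le:
  assumes "cu_doubling_steps n L"
  shows "poset_length L \<le> n"
proof -
  have "card K - 1 \<le> n" if "is_chain L K" for K
    using chain_card_le[OF _ that] cu_doubling_steps_length[OF assms] by fastforce
  then have "{card K - 1 | K. is_chain L K} \<subseteq> {..n}"
    by blast
  moreover have "is_chain L {}"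
    by (simp add: is_chain_def)
  ultimately show ?thesis
    unfolding poset_length_def by (intro Max.boundedI) (auto intro: finite_subset)
qed

definition completely_join_irreducible :: "bool list set \<Rightarrow> bool list \<Rightarrow> bool" where
  "completely_join_irreducible L x \<longleftrightarrow>
    x \<in> L \<and> (\<exists>m\<in>L. lt m x \<and> (\<forall>z\<in>L. lt z x \<longrightarrow> leq z m))"

lemma completely_join_irreducible_imp_join_irreducible:
  assumes "completely_join_irreducible L x"
  shows "x \<in> join_irreducibles L"
proof -
  obtain m where x: "x \<in> L" and m: "m \<in> L" "lt m x" "\<forall>z\<in>L. lt z x \<longrightarrow> leq z m"
    using assms unfolding completely_join_irreducible_def by blast
  have "{y. covers L x y} = {m}"
  proof (intro equalityI subsetI)
    fix y
    assume "y \<in> {y. covers L x y}"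
    then have "y \<in> L" "lt y x" "\<not> (\<exists>z\<in>L. lt y z \<and> lt z x)"
      unfolding covers_def by auto
    then show "y \<in> {m}"
      using m unfolding lt_def by auto
  next
    fix y
    assume "y \<in> {m}"
    then show "y \<in> {y. covers L x y}"
      using m x unfolding covers_def lt_def by (auto dest: leq_antisym)
  qed
  then show ?thesis
    using x unfolding join_irreducibles_def by simp
qed

lemma completely_join_irreducible_doubling_lift:
  assumes "q \<in> L" "leq p q" and j: "completely_join_irreducible L j"
  shows "completely_join_irreducible (doubling L (interval L p q)) ((\<not> leq j q) # j)"
proof -
  define L' where "L' = doubling L (interval L p q)"
  note mem = Cons_mem_doubling_interval[OF assms(1,2), folded L'_def]
  obtain m where "j \<in> L" "m \<in> L" "lt m j" and below: "\<forall>z\<in>L. lt z j \<longrightarrow> leq z m"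
    using j unfolding completely_join_irreducible_def by blast
  define bit where "bit = (\<not> leq j q \<and> in_upper p q m)"
  have j': "(\<not> leq j q) # j \<in> L'"
    using \<open>j \<in> L\<close> mem by (simp add: in_upper_def)
  have "leq m q" if "\<not> bit"
    using that \<open>lt m j\<close> leq_trans unfolding bit_def in_upper_def lt_def by blast
  then have m': "bit # m \<in> L'"
    using \<open>m \<in> L\<close> mem unfolding bit_def by auto
  have "lt (bit # m) ((\<not> leq j q) # j)"
    using \<open>lt m j\<close> unfolding lt_def bit_def by auto
  moreover have "leq w (bit # m)" if "w \<in> L'" "lt w ((\<not> leq j q) # j)" for w
  proof -
    obtain d z where w: "w = d # z" "z \<in> L" "if d then in_upper p q z else leq z q"
      using doubling_interval_memE \<open>w \<in> L'\<close> assms(1,2) unfolding L'_def by metis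
    have "z \<noteq> j"
      using that(2) w by (auto simp: lt_def)
    then have "leq z m"
      using below that(2) w unfolding lt_def by auto
    moreover have "d \<longrightarrow> bit"
      using w that(2) in_upper_mono \<open>leq z m\<close> unfolding bit_def lt_def by auto
    ultimately show ?thesis
      using w by auto
  qed
  ultimately show ?thesis
    using j' m' unfolding completely_join_irreducible_def L'_def by blast
qed

lemma completely_join_irreducible_doubling_new:
  assumes "p \<in> L" "q \<in> L" "leq p q"
  shows "completely_join_irreducible (doubling L (interval L p q)) (True # p)"
proof -
  define L' where "L' = doubling L (interval L p q)"
  note mem = Cons_mem_doubling_interval[OF assms(2,3), folded L'_def]
  have p': "True # p \<in> L'" and p'': "False # p \<in> L'"
    using mem assms by (simp_all add: in_upper_def)
  have "leq w (False # p)" if "w \<in> L'" "lt w (True # p)" for w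
  proof -
    obtain d z where w: "w = d # z" "z \<in> L" "if d then in_upper p q z else leq z q"
      using doubling_interval_memE \<open>w \<in> L'\<close> assms(2,3) unfolding L'_def by metis
    have "leq z p"
      using that(2) w unfolding lt_def by simp
    moreover have "\<not> d"
    proof
      assume d
      then have "z \<noteq> p" "in_upper p q z"
        using that(2) w unfolding lt_def by auto
      then show False
        using \<open>leq z p\<close> assms(3) leq_trans leq_antisym unfolding in_upper_def by blast
    qed
    ultimately show ?thesis
      using w by simp
  qed
  moreover have "lt (False # p) (True # p)"
    unfolding lt_def by simp
  ultimately show ?thesis
    using p' p'' unfolding completely_join_irreducible_def L'_def by blast
qed

lemma card_completely_join_irreducible_doubling:
  assumes "finite L" "p \<in> L" "q \<in> L" "leq p q"
  shows "card {x. completely_join_irreducible L x}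
    < card {x. completely_join_irreducible (doubling L (interval L p q)) x}"
proof -
  define L' where "L' = doubling L (interval L p q)"
  define lift where "lift j = (\<not> leq j q) # j" for j
  define S where "S = {x. completely_join_irreducible L x}"
  have "finite S"
    using assms(1) unfolding S_def completely_join_irreducible_def by simp
  moreover have "inj_on lift S"
    unfolding inj_on_def lift_def by simp
  moreover have "True # p \<notin> lift ` S"
    unfolding lift_def using assms(4) by auto
  ultimately have "card S < card (insert (True # p) (lift ` S))"
    by (simp add: card_image)
  also have "\<dots> \<le> card {x. completely_join_irreducible L' x}"
  proof (rule card_mono)
    show "finite {x. completely_join_irreducible L' x}"
      using assms(1) finite_doubling[OF _ finite_subset[OF interval_subset]]
      unfolding L'_def completely_join_irreducible_def by simp
    show "insert (True # p) (lift ` S) \<subseteq> {x. completely_join_irreducible L' x}"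
      using completely_join_irreducible_doubling_new[OF assms(2-4)]
        completely_join_irreducible_doubling_lift[OF assms(3,4)]
      unfolding S_def L'_def lift_def by auto
  qed
  finally show ?thesis
    unfolding S_def L'_def .
qed

lemma card_completely_join_irreducible_ge:
  "cu_doubling_steps n L \<Longrightarrow> n \<le> card {x. completely_join_irreducible L x}"
proof (induct rule: cu_doubling_steps.induct)
  case (step n L p q)
  then show ?case
    using card_completely_join_irreducible_doubling[OF cu_doubling_steps_finite] by fastforce
qed simp

lemma card_join_irreducibles_ge:
  assumes "cu_doubling_steps n L"
  shows "n \<le> card (join_irreducibles L)"
proof -
  have "n \<le> card {x. completely_join_irreducible L x}"
    using card_completely_join_irreducible_ge[OF assms] .
  also have "\<dots> \<le> card (join_irreducibles L)"
    using cu_doubling_steps_finite[OF assms] completely_join_irreducible_imp_join_irreducible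
    unfolding join_irreducibles_def by (intro card_mono) auto
  finally show ?thesis .
qed

lemma extremal_poset_length:
  assumes "cu_doubling_steps n L" "extremal L"
  shows "poset_length L = n"
  using poset_length_le[OF assms(1)] card_join_irreducibles_ge[OF assms(1)] assms(2)
  unfolding extremal_def by simp

(* Quantifying over b <= c rather than b < c is what makes the induction work: b' < c' in
   L[[p,q]] may project to b = c in L. *)
definition left_modular_le :: "bool list set \<Rightarrow> bool list \<Rightarrow> bool" where
  "left_modular_le L a \<longleftrightarrow> (\<forall>b\<in>L. \<forall>c\<in>L. leq b c \<longrightarrow>
      meet L (join L b a) c = join L b (meet L a c))"

lemma doubling_top_bit_left_modular:
  assumes "p \<in> L" and m: "is_inf L a c m"
    and "\<beta> \<Longrightarrow> \<gamma>" "\<beta> \<Longrightarrow> in_upper p q b" "\<not> \<beta> \<Longrightarrow> leq b q" "\<alpha> \<Longrightarrow> leq p a"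
    and bm: "length b = length m" and "leq (sup_bits b m) c"
  shows "((\<beta> \<or> \<alpha>) \<and> \<gamma> \<and> in_upper p q (sup_bits b m)) \<longleftrightarrow>
    \<beta> \<or> (\<alpha> \<and> \<gamma> \<and> in_upper p q m)"
proof
  assume H: "(\<beta> \<or> \<alpha>) \<and> \<gamma> \<and> in_upper p q (sup_bits b m)"
  show "\<beta> \<or> (\<alpha> \<and> \<gamma> \<and> in_upper p q m)"
  proof (cases \<beta>)
    case False
    with H have \<alpha> \<gamma> and t: "in_upper p q (sup_bits b m)"
      by auto
    have "in_upper p q m"
    proof (rule ccontr)
      assume "\<not> in_upper p q m"
      then have "leq m q" "\<not> leq p m"
        unfolding in_upper_def by auto
      with False have "leq (sup_bits b m) q"
        using assms(5) sup_bits_least by blast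
      then have "leq p c"
        using t assms(8) leq_trans unfolding in_upper_def by blast
      then have "leq p m"
        using m \<open>\<alpha>\<close> assms(1,6) unfolding is_inf_def by blast
      with \<open>\<not> leq p m\<close> show False ..
    qed
    with \<open>\<alpha>\<close> \<open>\<gamma>\<close> show ?thesis
      by simp
  qed simp
next
  assume "\<beta> \<or> (\<alpha> \<and> \<gamma> \<and> in_upper p q m)"
  then show "(\<beta> \<or> \<alpha>) \<and> \<gamma> \<and> in_upper p q (sup_bits b m)"
    using assms(3,4) in_upper_mono sup_bits_upper1[OF bm] sup_bits_upper2[OF bm] by blast
qed

lemma left_modular_le_doubling:
  assumes L: "cu_doubling_steps n L" and "p \<in> L" "q \<in> L" "leq p q"
    and a: "left_modular_le L a" and "\<alpha> \<Longrightarrow> leq p a"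
    and "\<alpha> # a \<in> doubling L (interval L p q)"
  shows "left_modular_le (doubling L (interval L p q)) (\<alpha> # a)"
proof -
  define L' where "L' = doubling L (interval L p q)"
  have L': "cu_doubling_steps (Suc n) L'"
    unfolding L'_def using L assms(2-4) by (rule cu_doubling_steps.step)
  have a': "\<alpha> # a \<in> L'" and "a \<in> L"
    using assms(7) Cons_mem_doubling_interval[OF assms(3,4)] unfolding L'_def by auto
  have "meet L' (join L' b' (\<alpha> # a)) c' = join L' b' (meet L' (\<alpha> # a) c')"
    if b': "b' \<in> L'" and c': "c' \<in> L'" and "leq b' c'" for b' c'
  proof -
    obtain \<beta> b where b'_eq: "b' = \<beta> # b" and "b \<in> L" "if \<beta> then in_upper p q b else leq b q"
      using doubling_interval_memE b' assms(3,4) unfolding L'_def by metis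
    obtain \<gamma> c where c'_eq: "c' = \<gamma> # c" and "c \<in> L"
      using doubling_interval_memE c' assms(3,4) unfolding L'_def by metis
    have "leq b c" "\<beta> \<Longrightarrow> \<gamma>"
      using \<open>leq b' c'\<close> unfolding b'_eq c'_eq by auto
    obtain m where m: "is_inf L a c m"
      using cu_doubling_steps_is_inf[OF L \<open>a \<in> L\<close> \<open>c \<in> L\<close>] by blast
    obtain t where t: "is_inf L (sup_bits b a) c t"
      using cu_doubling_steps_is_inf[OF L cu_doubling_steps_sup_closed[OF L \<open>b \<in> L\<close> \<open>a \<in> L\<close>]
        \<open>c \<in> L\<close>] by blast
    have "m \<in> L" "leq t c"
      using m t unfolding is_inf_def by auto
    have "t = meet L (join L b a) c"
      using meet_eqI[OF t] join_cu_doubling_steps[OF L \<open>b \<in> L\<close> \<open>a \<in> L\<close>] by simp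
    also have "\<dots> = join L b (meet L a c)"
      using a \<open>b \<in> L\<close> \<open>c \<in> L\<close> \<open>leq b c\<close> unfolding left_modular_le_def by blast
    also have "\<dots> = sup_bits b m"
      using meet_eqI[OF m] join_cu_doubling_steps[OF L \<open>b \<in> L\<close> \<open>m \<in> L\<close>] by simp
    finally have t_eq: "t = sup_bits b m" .
    have "join L' b' (\<alpha> # a) = (\<beta> \<or> \<alpha>) # sup_bits b a"
      using join_cu_doubling_steps[OF L' b' a'] unfolding b'_eq by simp
    moreover have "(\<beta> \<or> \<alpha>) # sup_bits b a \<in> L'"
      using cu_doubling_steps_sup_closed[OF L' b' a'] unfolding b'_eq by simp
    ultimately have meet_join:
      "meet L' (join L' b' (\<alpha> # a)) c' = ((\<beta> \<or> \<alpha>) \<and> \<gamma> \<and> in_upper p q t) # t"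
      using meet_eqI[OF is_inf_doubling[OF assms(3,4) t]] c' unfolding c'_eq L'_def by simp
    have m': "is_inf L' (\<alpha> # a) c' ((\<alpha> \<and> \<gamma> \<and> in_upper p q m) # m)"
      using is_inf_doubling[OF assms(3,4) m] a' c' unfolding c'_eq L'_def by simp
    have "join L' b' (meet L' (\<alpha> # a) c') = (\<beta> \<or> (\<alpha> \<and> \<gamma> \<and> in_upper p q m)) # sup_bits b m"
      using meet_eqI[OF m'] join_cu_doubling_steps[OF L' b'] m' unfolding b'_eq is_inf_def by simp
    moreover have "length b = length m"
      using cu_doubling_steps_length[OF L] \<open>b \<in> L\<close> \<open>m \<in> L\<close> by simp
    ultimately show ?thesis
      using meet_join doubling_top_bit_left_modular[OF assms(2) m \<open>\<beta> \<Longrightarrow> \<gamma>\<close> _ _ assms(6)]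
        \<open>if \<beta> then in_upper p q b else leq b q\<close> \<open>leq t c\<close> unfolding t_eq by auto
  qed
  then show ?thesis
    unfolding left_modular_le_def L'_def by blast
qed

definition both_copies :: "bool list set \<Rightarrow> bool list set" where
  "both_copies K = {x. False # x \<in> K \<and> True # x \<in> K}"

lemma card_eq_card_tl_add_card_both_copies:
  assumes "finite K" "[] \<notin> K"
  shows "card K = card (tl ` K) + card (both_copies K)"
proof -
  define K0 where "K0 = {x. False # x \<in> K}"
  define K1 where "K1 = {x. True # x \<in> K}"
  have K: "K = Cons False ` K0 \<union> Cons True ` K1"
  proof (intro equalityI subsetI)
    fix w
    assume "w \<in> K"
    with assms(2) obtain b x where "w = b # x"
      by (cases w) auto
    with \<open>w \<in> K\<close> show "w \<in> Cons False ` K0 \<union> Cons True ` K1"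
      unfolding K0_def K1_def by (cases b) auto
  qed (auto simp: K0_def K1_def)
  have "K0 \<subseteq> tl ` K" "K1 \<subseteq> tl ` K"
    unfolding K0_def K1_def by (force intro: rev_image_eqI)+
  then have "finite K0" "finite K1"
    using assms(1) finite_subset by blast+
  have "card K = card K0 + card K1"
    unfolding K by (subst card_Un_disjoint) (auto simp: \<open>finite K0\<close> \<open>finite K1\<close> card_image)
  also have "\<dots> = card (K0 \<union> K1) + card (K0 \<inter> K1)"
    using card_Un_Int[OF \<open>finite K0\<close> \<open>finite K1\<close>] .
  also have "K0 \<union> K1 = tl ` K"
    unfolding K by (simp add: image_Un image_image)
  also have "K0 \<inter> K1 = both_copies K"
    unfolding K0_def K1_def both_copies_def by blast
  finally show ?thesis .
qed

lemma card_both_copies_le: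
  assumes "finite K" "\<forall>x\<in>K. \<forall>y\<in>K. leq x y \<or> leq y x"
  shows "card (both_copies K) \<le> 1"
proof -
  have "both_copies K \<subseteq> tl ` K"
    unfolding both_copies_def by (force intro: rev_image_eqI)
  then have "finite (both_copies K)"
    using assms(1) finite_subset by blast
  moreover have "leq x y" if "x \<in> both_copies K" "y \<in> both_copies K" for x y
    using that assms(2) unfolding both_copies_def by fastforce
  ultimately show ?thesis
    using card_le_Suc0_iff_eq leq_antisym by (metis One_nat_def)
qed

lemma is_chain_tl_doubling:
  assumes "q \<in> L" "leq p q" "is_chain (doubling L (interval L p q)) K"
  shows "is_chain L (tl ` K)"
proof -
  have w: "w \<noteq> [] \<and> tl w \<in> L" if wK: "w \<in> K" for w
  proof -
    have "w \<in> doubling L (interval L p q)"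
      using assms(3) wK unfolding is_chain_def by blast
    then obtain b x where "w = b # x" "x \<in> L"
      using doubling_interval_memE assms(1,2) by metis
    then show ?thesis
      by simp
  qed
  have "leq (tl w) (tl w') \<or> leq (tl w') (tl w)" if "w \<in> K" "w' \<in> K" for w w'
  proof -
    have "leq w w' \<or> leq w' w"
      using assms(3) that unfolding is_chain_def by blast
    then show ?thesis
      using w[OF that(1)] w[OF that(2)] by (cases w; cases w') auto
  qed
  then show ?thesis
    using w unfolding is_chain_def by blast
qed

lemma left_modular_le_chain:
  "cu_doubling_steps n L \<Longrightarrow> is_chain L K \<Longrightarrow> card K = Suc n \<Longrightarrow> a \<in> K \<Longrightarrow>
    left_modular_le L a"
proof (induct arbitrary: K a rule: cu_doubling_steps.induct)
  case base
  then have "a = []"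
    unfolding is_chain_def by auto
  moreover have "join {[]} [] [] = []" "meet {[]} [] [] = []"
    by (simp_all add: join_eqI meet_eqI is_inf_def)
  ultimately show ?case
    unfolding left_modular_le_def by simp
next
  case (step n L p q K a')
  define L' where "L' = doubling L (interval L p q)"
  note mem = Cons_mem_doubling_interval[OF step.hyps(4,5), folded L'_def]
  have K: "is_chain L' K"
    using step.prems(1) unfolding L'_def .
  then have "finite K"
    using cu_doubling_steps_finite[OF cu_doubling_steps.step[OF step.hyps(1,3-5)]] finite_subset
    unfolding is_chain_def L'_def by blast
  moreover have "[] \<notin> K"
    using K unfolding is_chain_def L'_def doubling_def by auto
  ultimately have "card K = card (tl ` K) + card (both_copies K)"
    by (rule card_eq_card_tl_add_card_both_copies)
  moreover have K_tl: "is_chain L (tl ` K)"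
    using is_chain_tl_doubling[OF step.hyps(4,5)] K unfolding L'_def .
  moreover have "card (tl ` K) \<le> Suc n"
    using chain_card_le[OF _ K_tl] cu_doubling_steps_length[OF step.hyps(1)] by blast
  moreover have "card (both_copies K) \<le> 1"
    using card_both_copies_le \<open>finite K\<close> K unfolding is_chain_def by blast
  ultimately have card_tl: "card (tl ` K) = Suc n" and "both_copies K \<noteq> {}"
    using step.prems(2) by auto
  then obtain x where x: "False # x \<in> K" "True # x \<in> K"
    unfolding both_copies_def by blast
  obtain \<alpha> a where a'_eq: "a' = \<alpha> # a"
    using step.prems(3) \<open>[] \<notin> K\<close> by (cases a') auto
  have "left_modular_le L a"
    using step.hyps(2)[OF K_tl card_tl] step.prems(3) unfolding a'_eq by force
  moreover have "leq p a" if \<alpha>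
  proof -
    have "leq x q" "in_upper p q x"
      using x K mem unfolding is_chain_def by auto
    then have "leq p x"
      unfolding in_upper_def by simp
    moreover have "leq (False # x) (True # a)"
      using K x step.prems(3) that unfolding is_chain_def a'_eq by fastforce
    ultimately show ?thesis
      using leq_trans by auto
  qed
  moreover have "\<alpha> # a \<in> doubling L (interval L p q)"
    using K step.prems(3) unfolding is_chain_def a'_eq L'_def by blast
  ultimately show ?case
    unfolding a'_eq by (rule left_modular_le_doubling[OF step.hyps(1,3-5)])
qed

theorem lemma3p20:
  assumes "cu_doubling L"
    and "extremal L"
    and "a \<in> spine L"
  shows "left_modular L a"
proof -
  obtain n where L: "cu_doubling_steps n L"
    using cu_doubling_steps_exists[OF assms(1)] by blast
  obtain K where K: "is_chain L K" "a \<in> K" "card K - 1 = poset_length L"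
    using assms(3) unfolding spine_def by blast
  have "finite K"
    using K(1) cu_doubling_steps_finite[OF L] finite_subset unfolding is_chain_def by blast
  then have "card K = Suc n"
    using K extremal_poset_length[OF L assms(2)] by (cases "card K") auto
  then have "left_modular_le L a"
    using left_modular_le_chain[OF L K(1)] K(2) by blast
  then show ?thesis
    unfolding left_modular_le_def left_modular_def lt_def by blast
qed

end
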